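(* Let $a,b>0$ and $p>1$. For each integer $k\ge 3$ let $\mathcal{P}_{p,k}$ be the polygon $P_0P_1\dots P_{k-1}$ (the union of its edges $[P_t,P_{t+1}]$, $t=0,\dots,k-1$, indices modulo $k$), where $$P_t=\frac{1}{\left\|\left(\cos\frac{2t\pi}{k},\sin\frac{2t\pi}{k}\right)\right\|_p}\left(\cos\frac{2t\pi}{k},\ \sin\frac{2t\pi}{k}\right),\quad t=0,1,\dots,k-1,$$ and let $\mathcal{Q}_{p,k}=\operatorname{conv}(\mathcal{P}_{p,k})$. Then $d_H(\mathcal{P}_{p,k},\mathcal{C}_p)\to 0$ as $k\to\infty$, and consequently $d_H(\mathcal{Q}_{p,k},\mathcal{D}_p)\to 0$ as $k\to\infty$.
   Context: $\|(x,y)\|_p=\left(|x/a|^p+|y/b|^p\right)^{1/p}$. The superellipse is $\mathcal{C}_p=\{(x,y)\in\mathbb{R}^2 \mid |x/a|^p+|y/b|^p=1\}$ and the superelliptic disk is $\mathcal{D}_p=\operatorname{conv}(\mathcal{C}_p)=\{(x,y)\in\mathbb{R}^2\mid |x/a|^p+|y/b|^p\le 1\}$. The points $P_t$ lie on $\mathcal{C}_p$. $d_H$ is the Hausdorff–Pompeiu distance with respect to the Euclidean norm: $d_H(A,B)=\max\{\sup_{x\in A}\inf_{y\in B}\|x-y\|,\sup_{y\in B}\inf_{x\in A}\|x-y\|\}$. *)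

theory Defs
  imports "HOL-Analysis.Analysis"
begin

text \<open>Points of the plane are modelled as \<open>real \<times> real\<close>; the norm/dist on this
  product type is the Euclidean one.\<close>

definition pnorm :: "real \<Rightarrow> real \<Rightarrow> real \<Rightarrow> real \<times> real \<Rightarrow> real" where
  "pnorm a b p v = (\<bar>fst v / a\<bar> powr p + \<bar>snd v / b\<bar> powr p) powr (1 / p)"

definition superellipse :: "real \<Rightarrow> real \<Rightarrow> real \<Rightarrow> (real \<times> real) set" where
  "superellipse a b p = {(x, y). \<bar>x / a\<bar> powr p + \<bar>y / b\<bar> powr p = 1}"

definition superelliptic_disk :: "real \<Rightarrow> real \<Rightarrow> real \<Rightarrow> (real \<times> real) set" where
  "superelliptic_disk a b p = convex hull (superellipse a b p)"

definition hausdorff_dist :: "('a::metric_space) set \<Rightarrow> 'a set \<Rightarrow> real" where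
  "hausdorff_dist A B = max (SUP x\<in>A. infdist x B) (SUP y\<in>B. infdist y A)"

definition vertex :: "real \<Rightarrow> real \<Rightarrow> real \<Rightarrow> nat \<Rightarrow> nat \<Rightarrow> real \<times> real" where
  "vertex a b p k t =
     (let u = (cos (2 * real t * pi / real k), sin (2 * real t * pi / real k))
      in (1 / pnorm a b p u) *\<^sub>R u)"

definition polygon :: "real \<Rightarrow> real \<Rightarrow> real \<Rightarrow> nat \<Rightarrow> (real \<times> real) set" where
  "polygon a b p k =
     (\<Union>t\<in>{..<k}. closed_segment (vertex a b p k t) (vertex a b p k ((t + 1) mod k)))"

definition polygon_hull :: "real \<Rightarrow> real \<Rightarrow> real \<Rightarrow> nat \<Rightarrow> (real \<times> real) set" where
  "polygon_hull a b p k = convex hull (polygon a b p k)"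

end

theory Submission
  imports Defs
begin

text \<open>The superellipse is the image of the closed curve
  \<open>\<gamma>(\<theta>) = (cos \<theta>, sin \<theta>) / \<parallel>(cos \<theta>, sin \<theta>)\<parallel>\<^sub>p\<close>, \<open>\<theta> \<in> [0, 2\<pi>]\<close>, and the polygon
  \<open>P\<^sub>p\<^sub>,\<^sub>k\<close> is inscribed in \<open>\<gamma>\<close> at the angles \<open>2t\<pi>/k\<close>. By uniform continuity of \<open>\<gamma>\<close>,
  once the mesh \<open>2\<pi>/k\<close> is small every edge is shorter than \<open>\<epsilon>\<close>; so each point of an edge
  is \<open>\<epsilon>\<close>-close to its first vertex, which lies on the curve, and each point of the curve is
  \<open>\<epsilon>\<close>-close to the vertex preceding it. Two-sided \<open>\<epsilon>\<close>-closeness passes to convex hulls,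
  because the neighbourhood \<open>C + cball 0 \<epsilon>'\<close> of a convex set \<open>C\<close> is convex.\<close>

definition hausdorff_close :: "real \<Rightarrow> ('a::metric_space) set \<Rightarrow> 'a set \<Rightarrow> bool" where
  "hausdorff_close e A B \<longleftrightarrow> (\<forall>x\<in>A. infdist x B \<le> e) \<and> (\<forall>y\<in>B. infdist y A \<le> e)"

text \<open>Nonemptiness matters: a real \<open>SUP\<close> over the empty set is an unspecified value.\<close>

lemma abs_hausdorff_dist_le:
  fixes A B :: "'a::metric_space set"
  assumes "A \<noteq> {}" "B \<noteq> {}" "hausdorff_close e A B"
  shows "\<bar>hausdorff_dist A B\<bar> \<le> e"
proof -
  have AB: "(SUP x\<in>A. infdist x B) \<le> e" and BA: "(SUP y\<in>B. infdist y A) \<le> e"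
    using assms unfolding hausdorff_close_def by (auto intro: cSUP_least)
  obtain x where x: "x \<in> A" using assms(1) by blast
  have "bdd_above ((\<lambda>x. infdist x B) ` A)"
    using assms(3) unfolding hausdorff_close_def by (auto intro: bdd_aboveI2)
  then have "0 \<le> (SUP x\<in>A. infdist x B)"
    using x infdist_nonneg by (rule cSUP_upper2)
  with AB BA show ?thesis unfolding hausdorff_dist_def by auto
qed

lemma hausdorff_dist_tendsto_zero:
  fixes A B :: "'b \<Rightarrow> 'a::metric_space set"
  assumes "\<And>e. e > 0 \<Longrightarrow>
    \<forall>\<^sub>F n in F. A n \<noteq> {} \<and> B n \<noteq> {} \<and> hausdorff_close e (A n) (B n)"
  shows "((\<lambda>n. hausdorff_dist (A n) (B n)) \<longlongrightarrow> 0) F"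
proof (rule tendstoI)
  fix e :: real assume "e > 0"
  then have "\<forall>\<^sub>F n in F. A n \<noteq> {} \<and> B n \<noteq> {} \<and> hausdorff_close (e / 2) (A n) (B n)"
    using assms by simp
  then show "\<forall>\<^sub>F n in F. dist (hausdorff_dist (A n) (B n)) 0 < e"
  proof eventually_elim
    case (elim n)
    then have "\<bar>hausdorff_dist (A n) (B n)\<bar> \<le> e / 2" by (intro abs_hausdorff_dist_le) auto
    with \<open>e > 0\<close> show ?case by simp
  qed
qed

lemma infdist_lessE:
  fixes B :: "'a::metric_space set"
  assumes "B \<noteq> {}" "infdist x B < r"
  obtains y where "y \<in> B" "dist x y < r"
proof -
  have "bdd_below ((\<lambda>y. dist x y) ` B)" by (auto intro: bdd_belowI2[where m=0])
  then show ?thesis using assms that unfolding infdist_def by (auto simp: cINF_less_iff)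
qed

lemma infdist_convex_hull_le:
  fixes A B :: "'a::real_normed_vector set"
  assumes "B \<noteq> {}" "\<And>y. y \<in> A \<Longrightarrow> infdist y B \<le> e" "x \<in> convex hull A"
  shows "infdist x (convex hull B) \<le> e"
proof (rule field_le_epsilon)
  fix d :: real assume "d > 0"
  have "A \<subseteq> convex hull B + cball 0 (e + d)"
  proof
    fix y assume "y \<in> A"
    with assms(2) \<open>d > 0\<close> have "infdist y B < e + d" by force
    then obtain z where "z \<in> B" "dist y z < e + d" by (rule infdist_lessE[OF assms(1)])
    then have "z + (y - z) \<in> convex hull B + cball 0 (e + d)"
      by (intro set_plus_intro hull_inc) (auto simp: dist_norm norm_minus_commute)
    then show "y \<in> convex hull B + cball 0 (e + d)" by simp
  qed
  then have "convex hull A \<subseteq> convex hull B + cball 0 (e + d)"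
    by (intro hull_minimal convex_set_plus) auto
  then obtain z w where "z \<in> convex hull B" "w \<in> cball 0 (e + d)" "x = z + w"
    using assms(3) by (meson set_plus_elim subsetD)
  then show "infdist x (convex hull B) \<le> e + d"
    by (intro infdist_le2) (auto simp: dist_norm)
qed

lemma hausdorff_close_convex_hull:
  fixes A B :: "'a::real_normed_vector set"
  assumes "A \<noteq> {}" "B \<noteq> {}" "hausdorff_close e A B"
  shows "hausdorff_close e (convex hull A) (convex hull B)"
  using assms infdist_convex_hull_le[of B A e] infdist_convex_hull_le[of A B e]
  unfolding hausdorff_close_def by blast

definition inscribed_polygon :: "(real \<Rightarrow> 'a::real_vector) \<Rightarrow> nat \<Rightarrow> 'a set" where
  "inscribed_polygon \<gamma> k = (\<Union>t\<in>{..<k}.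
     closed_segment (\<gamma> (2 * real t * pi / real k)) (\<gamma> (2 * real ((t + 1) mod k) * pi / real k)))"

lemma node_angle_bounds:
  assumes "t \<le> k" "k > 0"
  shows "0 \<le> 2 * real t * pi / real k" "2 * real t * pi / real k \<le> 2 * pi"
    and "t < k \<Longrightarrow> 2 * real t * pi / real k < 2 * pi"
  using assms by (auto simp: field_simps)

lemma inscribed_polygon_near_curve:
  fixes \<gamma> :: "real \<Rightarrow> 'a::real_normed_vector"
  assumes closed: "\<gamma> (2 * pi) = \<gamma> 0" and "k > 0"
    and modulus: "\<And>x y. x \<in> {0..2*pi} \<Longrightarrow> y \<in> {0..2*pi} \<Longrightarrow> dist x y \<le> 2 * pi / k \<Longrightarrow>
                   dist (\<gamma> x) (\<gamma> y) \<le> e"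
    and "x \<in> inscribed_polygon \<gamma> k"
  shows "infdist x (\<gamma> ` {0..<2*pi}) \<le> e"
proof -
  obtain t where "t < k" and x: "x \<in> closed_segment (\<gamma> (2 * real t * pi / real k))
      (\<gamma> (2 * real ((t + 1) mod k) * pi / real k))"
    using assms(4) unfolding inscribed_polygon_def by blast
  have next_node: "\<gamma> (2 * real ((t + 1) mod k) * pi / real k) = \<gamma> (2 * real (t + 1) * pi / real k)"
  proof (cases "t + 1 < k")
    case False
    with \<open>t < k\<close> have "t + 1 = k" by simp
    with closed \<open>k > 0\<close> show ?thesis by simp
  qed simp
  have "dist (2 * real (t + 1) * pi / real k) (2 * real t * pi / real k) = 2 * pi / k"
    using \<open>k > 0\<close> by (simp add: dist_real_def field_simps)
  then have "dist (\<gamma> (2 * real (t + 1) * pi / real k)) (\<gamma> (2 * real t * pi / real k)) \<le> e"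
    using \<open>t < k\<close> \<open>k > 0\<close> node_angle_bounds[of "t + 1" k] node_angle_bounds[of t k]
    by (intro modulus) auto
  then have "dist x (\<gamma> (2 * real t * pi / real k)) \<le> e"
    using segment_bound1[OF x] next_node by (simp add: dist_norm)
  moreover have "\<gamma> (2 * real t * pi / real k) \<in> \<gamma> ` {0..<2*pi}"
    using \<open>t < k\<close> node_angle_bounds[of t k] by auto
  ultimately show ?thesis by (simp add: infdist_le2)
qed

lemma curve_near_inscribed_polygon:
  fixes \<gamma> :: "real \<Rightarrow> 'a::real_normed_vector"
  assumes "k > 0"
    and modulus: "\<And>x y. x \<in> {0..2*pi} \<Longrightarrow> y \<in> {0..2*pi} \<Longrightarrow> dist x y \<le> 2 * pi / k \<Longrightarrow>
                   dist (\<gamma> x) (\<gamma> y) \<le> e"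
    and \<theta>: "\<theta> \<in> {0..<2*pi}"
  shows "infdist (\<gamma> \<theta>) (inscribed_polygon \<gamma> k) \<le> e"
proof -
  define q where "q = \<theta> * k / (2 * pi)"
  have "0 \<le> q" "q < k"
    using \<theta> \<open>k > 0\<close> by (auto simp: q_def field_simps)
  define t where "t = nat \<lfloor>q\<rfloor>"
  have "real t \<le> q" "q < real t + 1"
    using \<open>0 \<le> q\<close> unfolding t_def by linarith+
  then have "t < k"
    using \<open>q < k\<close> by linarith
  have "2 * real t * pi / real k \<le> \<theta>" "\<theta> < 2 * real t * pi / real k + 2 * pi / k"
    using \<open>real t \<le> q\<close> \<open>q < real t + 1\<close> \<open>k > 0\<close> by (auto simp: q_def field_simps)
  then have "dist (\<gamma> \<theta>) (\<gamma> (2 * real t * pi / real k)) \<le> e"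
    using \<theta> \<open>t < k\<close> node_angle_bounds[of t k] by (intro modulus) (auto simp: dist_real_def)
  moreover have "\<gamma> (2 * real t * pi / real k) \<in> inscribed_polygon \<gamma> k"
    using \<open>t < k\<close> unfolding inscribed_polygon_def by blast
  ultimately show ?thesis by (simp add: infdist_le2)
qed

lemma inscribed_polygon_hausdorff_close:
  fixes \<gamma> :: "real \<Rightarrow> 'a::real_normed_vector"
  assumes "continuous_on {0..2*pi} \<gamma>" "\<gamma> (2 * pi) = \<gamma> 0" "e > 0"
  shows "\<forall>\<^sub>F k in sequentially.
    inscribed_polygon \<gamma> k \<noteq> {} \<and> hausdorff_close e (inscribed_polygon \<gamma> k) (\<gamma> ` {0..<2*pi})"
proof -
  have "uniformly_continuous_on {0..2*pi} \<gamma>"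
    using assms(1) by (rule compact_uniformly_continuous) simp
  then obtain d where "d > 0" and d: "\<And>x y. x \<in> {0..2*pi} \<Longrightarrow> y \<in> {0..2*pi} \<Longrightarrow>
      dist y x < d \<Longrightarrow> dist (\<gamma> y) (\<gamma> x) < e"
    using \<open>e > 0\<close> unfolding uniformly_continuous_on_def by blast
  have "\<forall>\<^sub>F k in sequentially. 2 * pi / real k < d"
    using lim_const_over_n \<open>d > 0\<close> by (rule order_tendstoD)
  then show ?thesis
    using eventually_gt_at_top[of 0]
  proof eventually_elim
    case (elim k)
    then have modulus: "dist (\<gamma> x) (\<gamma> y) \<le> e"
      if "x \<in> {0..2*pi}" "y \<in> {0..2*pi}" "dist x y \<le> 2 * pi / k" for x y
      using d[of y x] that by (simp add: dist_commute)
    have "\<gamma> (2 * real 0 * pi / real k) \<in> inscribed_polygon \<gamma> k"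
      using \<open>k > 0\<close> unfolding inscribed_polygon_def by blast
    moreover have "\<forall>x\<in>inscribed_polygon \<gamma> k. infdist x (\<gamma> ` {0..<2*pi}) \<le> e"
      using inscribed_polygon_near_curve[where \<gamma> = \<gamma>, OF assms(2) \<open>k > 0\<close> modulus] by blast
    moreover have "\<forall>y\<in>\<gamma> ` {0..<2*pi}. infdist y (inscribed_polygon \<gamma> k) \<le> e"
      using curve_near_inscribed_polygon[where \<gamma> = \<gamma>, OF \<open>k > 0\<close> modulus] by blast
    ultimately show ?case unfolding hausdorff_close_def by blast
  qed
qed

lemma pnorm_scaleR:
  assumes "p > 0"
  shows "pnorm a b p (r *\<^sub>R v) = \<bar>r\<bar> * pnorm a b p v"
proof -
  have "pnorm a b p (r *\<^sub>R v) = (\<bar>r\<bar> powr p * (\<bar>fst v / a\<bar> powr p + \<bar>snd v / b\<bar> powr p)) powr (1 / p)"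
    unfolding pnorm_def
    by (simp add: abs_mult powr_mult distrib_left mult.assoc times_divide_eq_right[symmetric]
        del: times_divide_eq_right)
  also have "\<dots> = (\<bar>r\<bar> powr p) powr (1 / p) * pnorm a b p v"
    unfolding pnorm_def by (simp add: powr_mult)
  also have "(\<bar>r\<bar> powr p) powr (1 / p) = \<bar>r\<bar>"
    using assms by (simp add: powr_powr)
  finally show ?thesis .
qed

lemma pnorm_pos:
  assumes "a \<noteq> 0" "b \<noteq> 0" "v \<noteq> 0"
  shows "pnorm a b p v > 0"
proof -
  have "fst v \<noteq> 0 \<or> snd v \<noteq> 0" using assms(3) by (simp add: prod_eq_iff)
  then have "\<bar>fst v / a\<bar> powr p + \<bar>snd v / b\<bar> powr p > 0"
    using assms(1,2) by (auto intro: add_pos_nonneg add_nonneg_pos)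
  then show ?thesis unfolding pnorm_def by simp
qed

lemma continuous_on_pnorm:
  assumes "a \<noteq> 0" "b \<noteq> 0" "p > 0"
  shows "continuous_on S (pnorm a b p)"
  unfolding pnorm_def using assms
  by (intro continuous_on_powr' continuous_intros) (auto simp: add_nonneg_eq_0_iff)

lemma superellipse_iff_pnorm_eq_1:
  assumes "p > 0"
  shows "v \<in> superellipse a b p \<longleftrightarrow> pnorm a b p v = 1"
proof -
  have "s powr (1 / p) = 1 \<longleftrightarrow> s = 1" if "s \<ge> 0" for s :: real
  proof
    assume "s powr (1 / p) = 1"
    then have "s \<noteq> 0" and "(s powr (1 / p)) powr p = 1" by auto
    with that assms show "s = 1" by (simp add: powr_powr)
  qed simp
  then show ?thesis
    unfolding superellipse_def pnorm_def by (auto simp: case_prod_beta)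
qed

definition superellipse_point :: "real \<Rightarrow> real \<Rightarrow> real \<Rightarrow> real \<Rightarrow> real \<times> real" where
  "superellipse_point a b p \<theta> = (1 / pnorm a b p (cos \<theta>, sin \<theta>)) *\<^sub>R (cos \<theta>, sin \<theta>)"

lemma cos_sin_nonzero: "(cos \<theta>, sin \<theta>) \<noteq> (0 :: real \<times> real)"
proof -
  have "norm (cos \<theta>, sin \<theta>) = 1" by (simp add: norm_Pair)
  then show ?thesis by auto
qed

lemma continuous_on_superellipse_point:
  assumes "a \<noteq> 0" "b \<noteq> 0" "p > 0"
  shows "continuous_on S (superellipse_point a b p)"
proof -
  have "continuous_on S (\<lambda>\<theta>. pnorm a b p (cos \<theta>, sin \<theta>))"
    using continuous_on_pnorm[OF assms]
    by (rule continuous_on_compose2) (auto intro!: continuous_on_Pair continuous_intros)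
  moreover have "pnorm a b p (cos \<theta>, sin \<theta>) \<noteq> 0" for \<theta>
    using pnorm_pos[OF assms(1,2) cos_sin_nonzero, of p \<theta>] by simp
  ultimately show ?thesis
    unfolding superellipse_point_def by (intro continuous_intros) auto
qed

lemma pnorm_superellipse_point:
  assumes "a \<noteq> 0" "b \<noteq> 0" "p > 0"
  shows "pnorm a b p (superellipse_point a b p \<theta>) = 1"
  unfolding superellipse_point_def pnorm_scaleR[OF assms(3)]
  using pnorm_pos[OF assms(1,2) cos_sin_nonzero, of p \<theta>] by simp

lemma superellipse_eq_image:
  assumes "a \<noteq> 0" "b \<noteq> 0" "p > 0"
  shows "superellipse a b p = superellipse_point a b p ` {0..<2*pi}"
proof
  show "superellipse_point a b p ` {0..<2*pi} \<subseteq> superellipse a b p"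
    using pnorm_superellipse_point[OF assms]
    by (auto simp: superellipse_iff_pnorm_eq_1[OF assms(3)])
next
  show "superellipse a b p \<subseteq> superellipse_point a b p ` {0..<2*pi}"
  proof
    fix v assume "v \<in> superellipse a b p"
    then have v: "pnorm a b p v = 1" by (simp add: superellipse_iff_pnorm_eq_1[OF assms(3)])
    define r where "r = norm v"
    have "v \<noteq> 0" using v by (auto simp: pnorm_def zero_prod_def)
    then have "r > 0" by (simp add: r_def)
    have "(fst v)\<^sup>2 + (snd v)\<^sup>2 = r\<^sup>2" by (simp add: r_def norm_prod_def)
    then have "(fst v / r)\<^sup>2 + (snd v / r)\<^sup>2 = 1"
      using \<open>r > 0\<close> by (simp add: power_divide flip: add_divide_distrib)
    then obtain \<theta> where "0 \<le> \<theta>" "\<theta> < 2 * pi" "fst v / r = cos \<theta>" "snd v / r = sin \<theta>"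
      by (rule sincos_total_2pi)
    then have polar: "v = r *\<^sub>R (cos \<theta>, sin \<theta>)"
      using \<open>r > 0\<close> by (simp add: prod_eq_iff divide_eq_eq)
    then have "r * pnorm a b p (cos \<theta>, sin \<theta>) = 1"
      using v \<open>r > 0\<close> pnorm_scaleR[OF assms(3), of a b r "(cos \<theta>, sin \<theta>)"] by simp
    then have "r = 1 / pnorm a b p (cos \<theta>, sin \<theta>)"
      by (auto simp: eq_divide_eq)
    then have "v = superellipse_point a b p \<theta>"
      using polar by (simp add: superellipse_point_def)
    with \<open>0 \<le> \<theta>\<close> \<open>\<theta> < 2 * pi\<close> show "v \<in> superellipse_point a b p ` {0..<2*pi}" by auto
  qed
qed

lemma polygon_eq_inscribed_polygon:
  "polygon a b p k = inscribed_polygon (superellipse_point a b p) k"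
  unfolding polygon_def inscribed_polygon_def vertex_def superellipse_point_def Let_def ..

theorem theorem3p10:
  fixes a b p :: real
  assumes "a > 0" and "b > 0" and "p > 1"
  shows "(\<lambda>k. hausdorff_dist (polygon a b p k) (superellipse a b p)) \<longlonglongrightarrow> 0 \<and>
         (\<lambda>k. hausdorff_dist (polygon_hull a b p k) (superelliptic_disk a b p)) \<longlonglongrightarrow> 0"
proof -
  have abp: "a \<noteq> 0" "b \<noteq> 0" "p > 0" using assms by auto
  have curve: "\<forall>\<^sub>F k in sequentially. polygon a b p k \<noteq> {} \<and> superellipse a b p \<noteq> {} \<and>
      hausdorff_close e (polygon a b p k) (superellipse a b p)" if "e > 0" for e
  proof -
    have "superellipse_point a b p (2 * pi) = superellipse_point a b p 0"
      by (simp add: superellipse_point_def)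
    from inscribed_polygon_hausdorff_close[OF continuous_on_superellipse_point[OF abp] this \<open>e > 0\<close>]
    show ?thesis by (simp add: polygon_eq_inscribed_polygon superellipse_eq_image[OF abp])
  qed
  have disk: "\<forall>\<^sub>F k in sequentially. polygon_hull a b p k \<noteq> {} \<and> superelliptic_disk a b p \<noteq> {} \<and>
      hausdorff_close e (polygon_hull a b p k) (superelliptic_disk a b p)" if "e > 0" for e
    using curve[OF that] by eventually_elim
      (simp add: polygon_hull_def superelliptic_disk_def hausdorff_close_convex_hull)
  show ?thesis
    using hausdorff_dist_tendsto_zero[OF curve] hausdorff_dist_tendsto_zero[OF disk] by blast
qed

end
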